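(* Let $\mathcal{H}_0,\mathcal{H}_1,\mathcal{H}_2$ be finite-dimensional Hilbert spaces, and let $\varrho_{1|0}\in\mathcal{L}(\mathcal{H}_0\otimes\mathcal{H}_1)$, $\varrho_{2|0}\in\mathcal{L}(\mathcal{H}_0\otimes\mathcal{H}_2)$ be the Choi–Jamiołkowski operators of CPTP maps $\mathcal{N}_{1|0}:\mathcal{L}(\mathcal{H}_0)\to\mathcal{L}(\mathcal{H}_1)$ and $\mathcal{N}_{2|0}:\mathcal{L}(\mathcal{H}_0)\to\mathcal{L}(\mathcal{H}_2)$. Consider the optimization problem $$\sup\ \mathrm{Tr}[W\varrho_{2|0}]+\mathrm{Tr}[\Lambda]$$ over $W\in\mathcal{L}(\mathcal{H}_0\otimes\mathcal{H}_2)$, $\Psi_0,\Psi_1\in\mathcal{L}(\mathcal{H}_0)$, $\Lambda\in\mathcal{L}(\mathcal{H}_1)$ subject to $$\begin{bmatrix}\Psi_0\otimes\mathbb{1}_{\mathcal{H}_2} & W\\ W^\dagger & \Psi_1\otimes\mathbb{1}_{\mathcal{H}_2}\end{bmatrix}\geq 0,\qquad \mathrm{Tr}[\Psi_0]=\mathrm{Tr}[\Psi_1]=1,$$ $$\Lambda\otimes\mathbb{1}_{\mathcal{H}_2}\leq-\mathrm{Tr}_{\mathcal{H}_0}\!\left[\big((\varrho_{1|0})^{T_{\mathcal{H}_1}}\otimes\mathbb{1}_{\mathcal{H}_2}\big)\big(W\otimes\mathbb{1}_{\mathcal{H}_1}\big)\right].$$ If there exists a CPTP map $\mathcal{N}_{2|1}:\mathcal{L}(\mathcal{H}_1)\to\mathcal{L}(\mathcal{H}_2)$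 with $\mathcal{N}_{2|0}=\mathcal{N}_{2|1}\circ\mathcal{N}_{1|0}$, then every feasible point $(W,\Psi_0,\Psi_1,\Lambda)$ satisfies $\mathrm{Tr}[W\varrho_{2|0}]+\mathrm{Tr}[\Lambda]\leq 0$; i.e. the optimal value of the problem is at most $0$.
   Context: Fix orthonormal bases of all Hilbert spaces; transpositions are with respect to them. For a linear map $\mathcal{N}:\mathcal{L}(\mathcal{H}_{\rm in})\to\mathcal{L}(\mathcal{H}_{\rm out})$, its Choi–Jamiołkowski operator is $\varrho_{\mathcal{N}}=\sum_{a,b}|a\rangle\langle b|\otimes\mathcal{N}(|a\rangle\langle b|)\in\mathcal{L}(\mathcal{H}_{\rm in}\otimes\mathcal{H}_{\rm out})$. $T_{\mathcal{H}_1}$ is partial transposition on the $\mathcal{H}_1$ factor; $(\varrho_{1|0})^{T_{\mathcal{H}_1}}\otimes\mathbb{1}_{\mathcal{H}_2}$ and $W\otimes\mathbb{1}_{\mathcal{H}_1}$ (meaning $W$ acting on the $\mathcal{H}_0\otimes\mathcal{H}_2$ factors and the identity on $\mathcal{H}_1$) are regarded as operators on $\mathcal{H}_0\otimes\mathcal{H}_1\otimes\mathcal{H}_2$, and $\mathrm{Tr}_{\mathcal{H}_0}$ is the partial trace over $\mathcal{H}_0$, giving an operator on $\mathcal{H}_1\otimes\mathcal{H}_2$. Operator inequalities $A\le B$ mean $B-A$ is Hermitian positive semidefinite. *)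

theory Defs
  imports Complex_Main "HOL-Library.Complex_Order"
begin

text \<open>Operators on a finite-dimensional Hilbert space with a fixed orthonormal basis
  indexed by a finite type 'a are represented by their matrices  'a => 'a => complex.
  Tensor products of spaces correspond to product index types.\<close>

type_synonym 'a op = "'a \<Rightarrow> 'a \<Rightarrow> complex"

definition hermitian_on :: "'a set \<Rightarrow> 'a op \<Rightarrow> bool" where
  "hermitian_on S A \<longleftrightarrow> (\<forall>i\<in>S. \<forall>j\<in>S. A i j = cnj (A j i))"

definition psd_on :: "'a set \<Rightarrow> 'a op \<Rightarrow> bool" where
  "psd_on S A \<longleftrightarrow> hermitian_on S A \<and>
     (\<forall>v :: 'a \<Rightarrow> complex. 0 \<le> Re (\<Sum>i\<in>S. \<Sum>j\<in>S. cnj (v i) * A i j * v j))"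

definition psd :: "('a::finite) op \<Rightarrow> bool" where
  "psd A \<longleftrightarrow> psd_on UNIV A"

definition op_le :: "('a::finite) op \<Rightarrow> 'a op \<Rightarrow> bool" where
  "op_le A B \<longleftrightarrow> psd (\<lambda>i j. B i j - A i j)"

definition tr :: "('a::finite) op \<Rightarrow> complex" where
  "tr A = (\<Sum>i\<in>UNIV. A i i)"

definition mmult :: "('a::finite) op \<Rightarrow> 'a op \<Rightarrow> 'a op" where
  "mmult A B = (\<lambda>i j. \<Sum>k\<in>UNIV. A i k * B k j)"

definition adj :: "'a op \<Rightarrow> 'a op" where
  "adj A = (\<lambda>i j. cnj (A j i))"

definition ident :: "'a op" where
  "ident = (\<lambda>i j. if i = j then 1 else 0)"

definition tensor :: "'a op \<Rightarrow> 'b op \<Rightarrow> ('a \<times> 'b) op" where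
  "tensor A B = (\<lambda>(i, k) (j, l). A i j * B k l)"

definition linear_map :: "('a op \<Rightarrow> 'b op) \<Rightarrow> bool" where
  "linear_map N \<longleftrightarrow>
     (\<forall>c X Y. N (\<lambda>i j. c * X i j + Y i j) = (\<lambda>i j. c * N X i j + N Y i j))"

text \<open>id_k (x) N applied to an operator on C^k (x) H_in (ancilla basis {0..<k}),
  acting blockwise.\<close>
definition ampl :: "('a op \<Rightarrow> 'b op) \<Rightarrow> (nat \<times> 'a) op \<Rightarrow> (nat \<times> 'b) op" where
  "ampl N X = (\<lambda>(i, b) (j, b'). N (\<lambda>a a'. X (i, a) (j, a')) b b')"

definition completely_positive :: "(('a::finite) op \<Rightarrow> ('b::finite) op) \<Rightarrow> bool" where
  "completely_positive N \<longleftrightarrow>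
     (\<forall>k::nat. \<forall>X. psd_on ({..<k} \<times> UNIV) X \<longrightarrow> psd_on ({..<k} \<times> UNIV) (ampl N X))"

definition trace_preserving :: "(('a::finite) op \<Rightarrow> ('b::finite) op) \<Rightarrow> bool" where
  "trace_preserving N \<longleftrightarrow> (\<forall>X. tr (N X) = tr X)"

definition CPTP :: "(('a::finite) op \<Rightarrow> ('b::finite) op) \<Rightarrow> bool" where
  "CPTP N \<longleftrightarrow> linear_map N \<and> completely_positive N \<and> trace_preserving N"

definition choi :: "('a op \<Rightarrow> 'b op) \<Rightarrow> ('a \<times> 'b) op" where
  "choi N = (\<lambda>(a, x) (b, y). N (\<lambda>i j. if i = a \<and> j = b then 1 else 0) x y)"

definition ptranspose2 :: "('a \<times> 'b) op \<Rightarrow> ('a \<times> 'b) op" where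
  "ptranspose2 R = (\<lambda>(a, b) (a', b'). R (a, b') (a', b))"

text \<open>(rho^{T_H1} (x) 1_H2) on H0 (x) H1 (x) H2, indices (a, b, c).\<close>
definition ext_rho :: "('a \<times> 'b) op \<Rightarrow> ('a \<times> 'b \<times> 'c) op" where
  "ext_rho R = (\<lambda>(a, b, c) (a', b', c'). ptranspose2 R (a, b) (a', b') * ident c c')"

text \<open>W (x) 1_H1, W acting on H0 (x) H2 factors, regarded on H0 (x) H1 (x) H2.\<close>
definition ext_W :: "('a \<times> 'c) op \<Rightarrow> ('a \<times> 'b \<times> 'c) op" where
  "ext_W W = (\<lambda>(a, b, c) (a', b', c'). W (a, c) (a', c') * ident b b')"

definition ptrace0 :: "(('a::finite) \<times> 'b \<times> 'c) op \<Rightarrow> ('b \<times> 'c) op" where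
  "ptrace0 M = (\<lambda>(b, c) (b', c'). \<Sum>a\<in>UNIV. M (a, b, c) (a, b', c'))"

definition block :: "'a op \<Rightarrow> 'a op \<Rightarrow> 'a op \<Rightarrow> 'a op \<Rightarrow> ('a + 'a) op" where
  "block A B C D = (\<lambda>x y. case (x, y) of
       (Inl i, Inl j) \<Rightarrow> A i j | (Inl i, Inr j) \<Rightarrow> B i j
     | (Inr i, Inl j) \<Rightarrow> C i j | (Inr i, Inr j) \<Rightarrow> D i j)"

end

(* Write N20 = N21 o N10 and let J be the Choi operator of N21. The constraint on Lambda says that
   P = -Tr_0[(rho_10^T1 (x) 1)(W (x) 1)] - Lambda (x) 1 is positive semidefinite, and complete positivity
   of N21 gives 0 <= Tr[P J]. Since the Choi operator of a composition is the link product of the Choi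
   operators, linearity of N21 turns Tr[Tr_0[...] J] into Tr[W rho_20], while trace preservation turns
   Tr[(Lambda (x) 1) J] into Tr Lambda. Hence Tr[W rho_20] + Tr Lambda = -Tr[P J] <= 0. *)

theory Submission
  imports Defs
begin

definition matrix_unit :: "'a \<Rightarrow> 'a \<Rightarrow> 'a op" where
  "matrix_unit a b = (\<lambda>i j. if i = a \<and> j = b then 1 else 0)"

lemma choi_apply: "choi N (a, x) (b, y) = N (matrix_unit a b) x y"
  by (simp add: choi_def matrix_unit_def)

lemma tr_matrix_unit: "tr (matrix_unit a b :: ('a::finite) op) = (if a = b then 1 else 0)"
  by (cases "a = b") (auto simp: tr_def matrix_unit_def intro: sum.neutral)

lemma sum_UNIV_prod: "(\<Sum>p\<in>UNIV. f p) = (\<Sum>a\<in>UNIV. \<Sum>b\<in>UNIV. f (a, b))"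
  by (simp add: sum.cartesian_product)

lemma mult_if_zero:
  fixes x y :: "'a::mult_zero"
  shows "x * (if P then y else 0) = (if P then x * y else 0)"
    and "(if P then y else 0) * x = (if P then y * x else 0)"
  by simp_all

lemma sum_if_zero: "(\<Sum>x\<in>A. if P then f x else 0) = (if P then sum f A else 0)"
  by simp

lemma sum_of_bool_graph:
  fixes g :: "'n \<times> 'c::finite \<Rightarrow> 'a::semiring_1"
  shows "(\<Sum>p\<in>A \<times> UNIV. of_bool (snd p = d (fst p)) * g p) = (\<Sum>n\<in>A. g (n, d n))"
proof -
  have "of_bool (y = d n) * g (n, y) = (if y = d n then g (n, d n) else 0)" for n y
    by simp
  then show ?thesis
    by (simp add: sum.cartesian_product')
qed

lemma linear_map_zero:
  assumes "linear_map N"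
  shows "N (\<lambda>i j. 0) = (\<lambda>i j. 0)"
  using assms[unfolded linear_map_def, rule_format, of "-1" "\<lambda>i j. 0" "\<lambda>i j. 0"] by simp

lemma linear_map_sum:
  assumes lin: "linear_map N" and "finite K"
  shows "N (\<lambda>i j. \<Sum>k\<in>K. c k * X k i j) = (\<lambda>i j. \<Sum>k\<in>K. c k * N (X k) i j)"
  using \<open>finite K\<close>
proof (induction K rule: finite_induct)
  case empty
  then show ?case by (simp add: linear_map_zero[OF lin])
next
  case (insert k K)
  then show ?case
    using lin[unfolded linear_map_def, rule_format, of "c k" "X k" "\<lambda>i j. \<Sum>k\<in>K. c k * X k i j"]
    by simp
qed

lemma matrix_unit_expansion: "Z = (\<lambda>i j. \<Sum>p\<in>UNIV. Z (fst p) (snd p) * matrix_unit (fst p) (snd p) i j)"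
  for Z :: "('a::finite) op"
proof (intro ext)
  fix i j
  have "Z a b * matrix_unit a b i j = (if b = j then if a = i then Z a b else 0 else 0)" for a b
    by (simp add: matrix_unit_def)
  then show "Z i j = (\<Sum>p\<in>UNIV. Z (fst p) (snd p) * matrix_unit (fst p) (snd p) i j)"
    by (simp only: sum_UNIV_prod fst_conv snd_conv) simp
qed

lemma linear_map_apply_choi:
  fixes N :: "('a::finite) op \<Rightarrow> 'b op"
  assumes "linear_map N"
  shows "N Z x y = (\<Sum>a\<in>UNIV. \<Sum>b\<in>UNIV. Z a b * choi N (a, x) (b, y))"
proof -
  have "N Z = N (\<lambda>i j. \<Sum>p\<in>UNIV. Z (fst p) (snd p) * matrix_unit (fst p) (snd p) i j)"
    by (rule arg_cong[where f = N, OF matrix_unit_expansion])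
  also have "\<dots> = (\<lambda>i j. \<Sum>p\<in>UNIV. Z (fst p) (snd p) * N (matrix_unit (fst p) (snd p)) i j)"
    by (rule linear_map_sum[OF assms finite])
  finally show ?thesis
    by (simp only: sum_UNIV_prod fst_conv snd_conv choi_apply)
qed

lemma choi_comp:
  fixes N1 :: "'a op \<Rightarrow> ('b::finite) op" and N2 :: "'b op \<Rightarrow> 'c op"
  assumes "linear_map N2"
  shows "choi (N2 \<circ> N1) (a, c) (a', c') = (\<Sum>b\<in>UNIV. \<Sum>b'\<in>UNIV. choi N1 (a, b) (a', b') * choi N2 (b, c) (b', c'))"
  by (simp only: choi_apply[of "N2 \<circ> N1"] comp_apply choi_apply[of N1]
      linear_map_apply_choi[OF assms, of "N1 (matrix_unit a a')"])

lemma psd_onD: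
  assumes "psd_on S A"
  shows "i \<in> S \<Longrightarrow> j \<in> S \<Longrightarrow> cnj (A i j) = A j i"
    and "0 \<le> Re (\<Sum>i\<in>S. \<Sum>j\<in>S. cnj (v i) * A i j * v j)"
proof -
  show "0 \<le> Re (\<Sum>i\<in>S. \<Sum>j\<in>S. cnj (v i) * A i j * v j)"
    using assms unfolding psd_on_def by blast
  assume "i \<in> S" "j \<in> S"
  with assms have "A j i = cnj (A i j)"
    unfolding psd_on_def hermitian_on_def by blast
  then show "cnj (A i j) = A j i"
    by simp
qed

lemma psd_on_quadratic_form_nonneg:
  assumes "psd_on S A"
  shows "0 \<le> (\<Sum>i\<in>S. \<Sum>j\<in>S. cnj (v i) * A i j * v j)"
proof -
  let ?q = "\<Sum>i\<in>S. \<Sum>j\<in>S. cnj (v i) * A i j * v j"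
  have "cnj ?q = (\<Sum>i\<in>S. \<Sum>j\<in>S. v i * A j i * cnj (v j))"
    by (simp add: cnj_sum psd_onD(1)[OF assms] cong: sum.cong)
  also have "\<dots> = ?q"
    by (subst sum.swap) (simp add: ac_simps)
  finally have "Im (cnj ?q) = Im ?q"
    by simp
  then have "Im ?q = 0"
    by (simp only: cnj.sel(2))
  with psd_onD(2)[OF assms] show ?thesis
    by (simp add: less_eq_complex_def)
qed

lemma psd_on_transpose:
  assumes "psd_on S A"
  shows "psd_on S (\<lambda>i j. A j i)"
  unfolding psd_on_def hermitian_on_def
proof (intro conjI ballI allI)
  show "A j i = cnj (A i j)" if "i \<in> S" "j \<in> S" for i j
    using psd_onD(1)[OF assms that] by (metis complex_cnj_cnj)
  fix v :: "'a \<Rightarrow> complex"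
  have "(\<Sum>i\<in>S. \<Sum>j\<in>S. cnj (v i) * A j i * v j)
      = (\<Sum>j\<in>S. \<Sum>i\<in>S. cnj (cnj (v j)) * A j i * cnj (v i))"
    by (subst sum.swap) (simp add: ac_simps)
  then show "0 \<le> Re (\<Sum>i\<in>S. \<Sum>j\<in>S. cnj (v i) * A j i * v j)"
    using psd_onD(2)[OF assms, of "\<lambda>x. cnj (v x)"] by simp
qed

lemma psd_on_reindex:
  assumes "psd_on S A" and f: "bij_betw f T S"
  shows "psd_on T (\<lambda>i j. A (f i) (f j))"
  unfolding psd_on_def hermitian_on_def
proof (intro conjI ballI allI)
  show "A (f i) (f j) = cnj (A (f j) (f i))" if "i \<in> T" "j \<in> T" for i j
    using psd_onD(1)[OF assms(1), of "f j" "f i"] bij_betwE[OF f] that by simp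
  fix v :: "'b \<Rightarrow> complex"
  define u where "u = v \<circ> inv_into T f"
  have v: "v i = u (f i)" if "i \<in> T" for i
    using f that by (simp add: u_def bij_betw_def)
  have "(\<Sum>i\<in>T. \<Sum>j\<in>T. cnj (v i) * A (f i) (f j) * v j)
      = (\<Sum>i\<in>T. \<Sum>j\<in>T. cnj (u (f i)) * A (f i) (f j) * u (f j))"
    by (simp add: v)
  also have "\<dots> = (\<Sum>i\<in>T. \<Sum>z\<in>S. cnj (u (f i)) * A (f i) z * u z)"
    by (rule sum.cong[OF refl], rule sum.reindex_bij_betw[OF f])
  also have "\<dots> = (\<Sum>y\<in>S. \<Sum>z\<in>S. cnj (u y) * A y z * u z)"
    by (rule sum.reindex_bij_betw[OF f])
  finally show "0 \<le> Re (\<Sum>i\<in>T. \<Sum>j\<in>T. cnj (v i) * A (f i) (f j) * v j)"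
    using psd_onD(2)[OF assms(1), of u] by simp
qed

lemma psd_on_graph_sum_nonneg:
  fixes Y :: "('n \<times> 'c::finite) op"
  assumes "psd_on (A \<times> UNIV) Y"
  shows "0 \<le> (\<Sum>n\<in>A. \<Sum>n'\<in>A. Y (n, d n) (n', d n'))"
proof -
  define v :: "'n \<times> 'c \<Rightarrow> complex" where "v p = of_bool (snd p = d (fst p))" for p
  have "cnj (v p) = v p" for p
    by (simp add: v_def)
  then have "(\<Sum>i\<in>A \<times> UNIV. \<Sum>j\<in>A \<times> UNIV. cnj (v i) * Y i j * v j)
      = (\<Sum>i\<in>A \<times> UNIV. v i * (\<Sum>j\<in>A \<times> UNIV. v j * Y i j))"
    by (simp add: sum_distrib_left ac_simps)
  also have "\<dots> = (\<Sum>i\<in>A \<times> UNIV. v i * (\<Sum>n'\<in>A. Y i (n', d n')))"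
    unfolding v_def by (simp only: sum_of_bool_graph)
  also have "\<dots> = (\<Sum>n\<in>A. \<Sum>n'\<in>A. Y (n, d n) (n', d n'))"
    unfolding v_def by (rule sum_of_bool_graph)
  finally show ?thesis
    using psd_on_quadratic_form_nonneg[OF assms, of v] by simp
qed

(* The sum is <Omega| (id (x) N)(Q^T) |Omega> for Omega = sum_c |c>|c>, with the output basis enumerated
   by the ancilla {..<k}; this gives Tr[Q J] >= 0 without any spectral theory. *)
lemma completely_positive_pairing_nonneg:
  fixes N :: "('b::finite) op \<Rightarrow> ('c::finite) op" and Q :: "('b \<times> 'c) op"
  assumes cp: "completely_positive N" and Q: "psd Q"
  shows "0 \<le> (\<Sum>c\<in>UNIV. \<Sum>c'\<in>UNIV. N (\<lambda>b b'. Q (b', c') (b, c)) c c')"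
proof -
  let ?K = "{..<card (UNIV :: 'c set)}"
  obtain dec :: "nat \<Rightarrow> 'c" where dec: "bij_betw dec ?K UNIV"
    using ex_bij_betw_nat_finite[OF finite_UNIV] by (auto simp: atLeast0LessThan)
  define f :: "nat \<times> 'b \<Rightarrow> 'b \<times> 'c" where "f = prod.swap \<circ> map_prod dec id"
  have "bij_betw f (?K \<times> UNIV) UNIV"
    unfolding f_def using bij_betw_map_prod[OF dec bij_betw_id] bij_swap
    by (metis UNIV_Times_UNIV bij_betw_trans)
  then have "psd_on (?K \<times> UNIV) (\<lambda>i j. Q (f j) (f i))"
    using psd_on_transpose[OF psd_on_reindex] Q unfolding psd_def by blast
  then have "psd_on (?K \<times> UNIV) (ampl N (\<lambda>i j. Q (f j) (f i)))"
    using cp unfolding completely_positive_def by blast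
  then have "0 \<le> (\<Sum>n\<in>?K. \<Sum>n'\<in>?K. ampl N (\<lambda>i j. Q (f j) (f i)) (n, dec n) (n', dec n'))"
    by (rule psd_on_graph_sum_nonneg)
  also have "\<dots> = (\<Sum>n\<in>?K. \<Sum>n'\<in>?K. N (\<lambda>b b'. Q (b', dec n') (b, dec n)) (dec n) (dec n'))"
    by (simp add: ampl_def f_def)
  also have "\<dots> = (\<Sum>n\<in>?K. \<Sum>c'\<in>UNIV. N (\<lambda>b b'. Q (b', c') (b, dec n)) (dec n) c')"
    by (rule sum.cong[OF refl], rule sum.reindex_bij_betw[OF dec])
  also have "\<dots> = (\<Sum>c\<in>UNIV. \<Sum>c'\<in>UNIV. N (\<lambda>b b'. Q (b', c') (b, c)) c c')"
    by (rule sum.reindex_bij_betw[OF dec])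
  finally show ?thesis .
qed

lemma tr_mmult_choi:
  fixes N :: "('b::finite) op \<Rightarrow> ('c::finite) op"
  assumes "linear_map N"
  shows "tr (mmult Q (choi N)) = (\<Sum>c\<in>UNIV. \<Sum>c'\<in>UNIV. N (\<lambda>b b'. Q (b', c') (b, c)) c c')"
proof -
  have "tr (mmult Q (choi N))
      = (\<Sum>b'\<in>UNIV. \<Sum>c'\<in>UNIV. \<Sum>b\<in>UNIV. \<Sum>c\<in>UNIV. Q (b', c') (b, c) * choi N (b, c) (b', c'))"
    by (simp add: tr_def mmult_def sum_UNIV_prod)
  also have "\<dots> = (\<Sum>c\<in>UNIV. \<Sum>c'\<in>UNIV. \<Sum>b\<in>UNIV. \<Sum>b'\<in>UNIV. Q (b', c') (b, c) * choi N (b, c) (b', c'))"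
    by (simp only: sum.cartesian_product UNIV_Times_UNIV,
        rule sum.reindex_bij_witness[where i = "\<lambda>(c, c', b, b'). (b', c', b, c)" and j = "\<lambda>(b', c', b, c). (c, c', b, b')"])
       auto
  finally show ?thesis
    by (simp add: linear_map_apply_choi[OF assms])
qed

lemma tr_mmult_choi_nonneg:
  fixes N :: "('b::finite) op \<Rightarrow> ('c::finite) op"
  assumes "linear_map N" and "completely_positive N" and "psd Q"
  shows "0 \<le> tr (mmult Q (choi N))"
  using completely_positive_pairing_nonneg[OF assms(2,3)] by (simp add: tr_mmult_choi[OF assms(1)])

lemma tr_mmult_tensor_ident_choi:
  fixes N :: "('b::finite) op \<Rightarrow> ('c::finite) op"
  assumes "trace_preserving N"
  shows "tr (mmult (tensor L ident) (choi N)) = tr L"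
proof -
  have "tr (mmult (tensor L ident) (choi N)) = (\<Sum>b\<in>UNIV. \<Sum>c\<in>UNIV. \<Sum>b'\<in>UNIV. L b b' * N (matrix_unit b' b) c c)"
    by (simp add: tr_def mmult_def tensor_def ident_def choi_apply sum_UNIV_prod mult_if_zero cong: if_cong)
  also have "\<dots> = (\<Sum>b\<in>UNIV. \<Sum>b'\<in>UNIV. L b b' * tr (N (matrix_unit b' b)))"
    unfolding tr_def sum_distrib_left by (rule sum.cong[OF refl], rule sum.swap)
  also have "\<dots> = tr L"
    using assms by (simp add: trace_preserving_def tr_matrix_unit mult_if_zero) (simp add: tr_def)
  finally show ?thesis .
qed

lemma tr_mmult_ptrace0_choi:
  fixes N1 :: "('a::finite) op \<Rightarrow> ('b::finite) op" and N2 :: "'b op \<Rightarrow> ('c::finite) op"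
    and W :: "('a \<times> 'c) op"
  assumes "linear_map N2"
  shows "tr (mmult (ptrace0 (mmult (ext_rho (choi N1) :: ('a \<times> 'b \<times> 'c) op) (ext_W W))) (choi N2))
       = tr (mmult W (choi (N2 \<circ> N1)))"
proof -
  have "tr (mmult (ptrace0 (mmult (ext_rho (choi N1) :: ('a \<times> 'b \<times> 'c) op) (ext_W W))) (choi N2))
      = (\<Sum>b\<in>UNIV. \<Sum>c\<in>UNIV. \<Sum>b'\<in>UNIV. \<Sum>c'\<in>UNIV. \<Sum>a\<in>UNIV. \<Sum>a'\<in>UNIV.
           choi N1 (a, b') (a', b) * W (a', c) (a, c') * choi N2 (b', c') (b, c))"
    by (simp add: tr_def mmult_def ptrace0_def ext_rho_def ext_W_def ptranspose2_def ident_def sum_UNIV_prod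
       sum_distrib_left sum_distrib_right mult_if_zero sum_if_zero cong: if_cong)
  also have "\<dots> = (\<Sum>a\<in>UNIV. \<Sum>c\<in>UNIV. \<Sum>a'\<in>UNIV. \<Sum>c'\<in>UNIV. \<Sum>b\<in>UNIV. \<Sum>b'\<in>UNIV.
           W (a, c) (a', c') * (choi N1 (a', b) (a, b') * choi N2 (b, c') (b', c)))"
    by (simp only: sum.cartesian_product UNIV_Times_UNIV,
        rule sum.reindex_bij_witness[where i = "\<lambda>(a, c, a', c', b, b'). (b', c, b, c', a', a)"
                                       and j = "\<lambda>(b, c, b', c', a, a'). (a', c, a, c', b', b)"])
       auto
  also have "\<dots> = tr (mmult W (choi (N2 \<circ> N1)))"
    by (simp add: tr_def mmult_def sum_UNIV_prod choi_comp[OF assms] sum_distrib_left)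
  finally show ?thesis .
qed

lemma tr_mmult_uminus: "tr (mmult (\<lambda>i j. - A i j) C) = - tr (mmult A C)"
  by (simp add: tr_def mmult_def sum_negf)

lemma tr_mmult_diff: "tr (mmult (\<lambda>i j. A i j - B i j) C) = tr (mmult A C) - tr (mmult B C)"
  by (simp add: tr_def mmult_def left_diff_distrib sum_subtractf)

theorem mainTheorem3:
  fixes N10 :: "('i0::finite) op \<Rightarrow> ('i1::finite) op"
    and N20 :: "'i0 op \<Rightarrow> ('i2::finite) op"
    and W :: "('i0 \<times> 'i2) op"
    and Psi0 Psi1 :: "'i0 op"
    and Lam :: "'i1 op"
  assumes cptp10: "CPTP N10"
    and cptp20: "CPTP N20"
    and factor: "\<exists>N21 :: 'i1 op \<Rightarrow> 'i2 op. CPTP N21 \<and> N20 = N21 \<circ> N10"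
    and blockpsd: "psd (block (tensor Psi0 ident) W (adj W) (tensor Psi1 ident))"
    and tr0: "tr Psi0 = 1"
    and tr1: "tr Psi1 = 1"
    and lamc: "op_le (tensor Lam (ident :: 'i2 op))
                 (\<lambda>x y. - ptrace0 (mmult (ext_rho (choi N10) :: ('i0 \<times> 'i1 \<times> 'i2) op)
                                         (ext_W W)) x y)"
  shows "tr (mmult W (choi N20)) + tr Lam \<le> 0"
proof -
  obtain N21 :: "'i1 op \<Rightarrow> 'i2 op" where "CPTP N21" and N20: "N20 = N21 \<circ> N10"
    using factor by blast
  then have lin: "linear_map N21" and cp: "completely_positive N21" and tp: "trace_preserving N21"
    by (simp_all add: CPTP_def)
  let ?M = "ptrace0 (mmult (ext_rho (choi N10) :: ('i0 \<times> 'i1 \<times> 'i2) op) (ext_W W))"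
  have "0 \<le> tr (mmult (\<lambda>i j. - ?M i j - tensor Lam ident i j) (choi N21))"
    using lamc unfolding op_le_def by (rule tr_mmult_choi_nonneg[OF lin cp])
  also have "\<dots> = - (tr (mmult W (choi N20)) + tr Lam)"
    by (simp add: tr_mmult_diff tr_mmult_uminus tr_mmult_ptrace0_choi[OF lin]
        tr_mmult_tensor_ident_choi[OF tp] N20)
  finally show ?thesis
    by (simp only: neg_0_le_iff_le)
qed

end
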